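(* Let $M,N$ be equivalent canonical dtlas such that $M$ is a dtpla with $P_M=\{\hat p_1,\dots,\hat p_n\}$ and $N$ is a dtop. Let $\varphi$ be the aheadness mapping from $N$ to $M$ and define $\psi(q)=(\varphi(q,\hat p_1),\dots,\varphi(q,\hat p_n))$ for $q\in Q_N$. Then $\psi$ is a bijection between $Q_N$ and $\mathrm{diftup}(M)$.
   Context: Trees and patterns. $T_\Delta(Z)$ is the set of trees over ranked alphabet $\Delta$ with extra nullary symbols $Z$; $t/v$ is the subtree at node $v\in\mathbb N_+^*$; $\bot$ is a special nullary symbol; $V_\bot(t)$ is the set of nodes of $t$ labelled $\bot$. For trees, $t\sqsubseteq t'$ means $t'$ is obtained from $t$ by replacing some occurrences of $\bot$ by trees; $\sqcap T$ is the greatest lower bound of a finite nonempty set $T$ of trees (largest common prefix with $\bot$ at the highest nodes of disagreement). A $\Sigma$-context is $C\in T_\Sigma(\{\bot\})$ with exactly one occurrence of $\bot$; $\mathcal C_\Sigma$ is their set; $C[t]$ replaces $\bot$ by $t$. Dtlas. A dtla $M$ from $\Sigma$ to $\Delta$ consists of a finite set $Q_M$ of states, a total deterministic bottom-up tree automaton with finite state set $P_M$ and transitions $\delta(a,p_1,\dots,p_k)$, extended to $\delta_M:T_\Sigma\to P_M$ ($[\![p]\!]_M=\delta_M^{-1}(p)$), axioms $A_M(p)\in T_\Delta(Q_M(\{x_0\}))$, and at most one rule $q(a(x_1\langle p_1\rangle,\dots,x_k\langle p_k\rangle))\to\mathrm{rhs}_M(q,a,p_1,\dots,p_k)\in T_\Delta(Q_M(X_k))$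 per $q,a,p_1,\dots,p_k$. Semantics: $q_M(a(s_1,\dots,s_k))=\mathrm{rhs}_M(q,a,\delta_M(s_1),\dots,\delta_M(s_k))[q'(x_i)\leftarrow q'_M(s_i)]$, $M(s)=A_M(\delta_M(s))[q(x_0)\leftarrow q_M(s)]$; two dtlas are equivalent if $[\![M]\!]=[\![N]\!]$. Total: $[\![M]\!]$ total. A dtop is a dtla with a single look-ahead state $\bot$. A dtpla is a dtla with $|P_M|\ge2$. $M(C[p])\in T_\Delta(Q_M\times P_M)$ is the output on $C\in\mathcal C_\Sigma$ with the hole treated as a leaf of look-ahead state $p$ and $q_M(p)=\langle q,p\rangle$; for a dtop $N$, $N(C)=N(C[\bot])$. A state $q$ is reachable if $\langle q,p\rangle$ labels a node of $M(C[p])$ for some $C,p$. $M$ is la-uniform if there is $\rho_M:Q_M\to P_M$ with domain of $[\![q]\!]_M$ equal to $[\![\rho_M(q)]\!]_M$, every $q(x_0)$ in $A_M(p)$ having $\rho_M(q)=p$, every $q'(x_i)$ in $\mathrm{rhs}_M(q,a,p_1,\dots,p_k)$ having $\rho_M(q')=p_i$, and the rule for $q,a,p_1,\dots,p_k$ existing iff $\delta(a,p_1,\dots,p_k)=\rho_M(q)$. Earliest: no state $q$ and $d\in\Delta$ such that $q(s)$ has root label $d$ for all $s$ in the domain of $[\![q]\!]$. Canonical: total, la-uniform, earliest, all states reachable, and distinct states have distinct translations. $\mathrm{pref}(M,C)=\sqcap\{M(C[\hat p_1]),\dots,M(C[\hat p_n])\}$ and $\mathrm{diftup}(M)=\{(M(C[\hat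 p_1])/v,\dots,M(C[\hat p_n])/v)\mid C\in\mathcal C_\Sigma,\ v\in V_\bot(\mathrm{pref}(M,C))\}$. Aheadness mapping: the unique $\varphi:Q_N\times P_M\to T_\Delta(Q_M\times P_M)$ with $M(C[p])=N(C)[\langle q,\bot\rangle\leftarrow\varphi(q,p)\mid q\in Q_N]$ for all $C\in\mathcal C_\Sigma$, $p\in P_M$. *)

theory Defs
  imports Main
begin

text \<open>Labels: a symbol of a ranked alphabet, an extra nullary symbol from a set Z, or the
  special nullary symbol bottom.\<close>
datatype ('d, 'z) sym = Sym 'd | Var 'z | Bot

datatype 'l tree = Node 'l "'l tree list"

fun root :: "'l tree \<Rightarrow> 'l" where
  "root (Node l ts) = l"

fun in_T :: "('d \<Rightarrow> nat) \<Rightarrow> 'd set \<Rightarrow> 'z set \<Rightarrow> ('d, 'z) sym tree \<Rightarrow> bool" where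
  "in_T rk D Z (Node (Sym d) ts) = (d \<in> D \<and> length ts = rk d \<and> (\<forall>t\<in>set ts. in_T rk D Z t))"
| "in_T rk D Z (Node (Var z) ts) = (z \<in> Z \<and> ts = [])"
| "in_T rk D Z (Node Bot ts) = False"

fun in_Tb :: "('d \<Rightarrow> nat) \<Rightarrow> 'd set \<Rightarrow> 'z set \<Rightarrow> ('d, 'z) sym tree \<Rightarrow> bool" where
  "in_Tb rk D Z (Node (Sym d) ts) = (d \<in> D \<and> length ts = rk d \<and> (\<forall>t\<in>set ts. in_Tb rk D Z t))"
| "in_Tb rk D Z (Node (Var z) ts) = (z \<in> Z \<and> ts = [])"
| "in_Tb rk D Z (Node Bot ts) = (ts = [])"

text \<open>Subtree at a node (nodes are lists of 0-based child indices).\<close>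
fun subt :: "'l tree \<Rightarrow> nat list \<Rightarrow> 'l tree option" where
  "subt t [] = Some t"
| "subt (Node l ts) (i # v) = (if i < length ts then subt (ts ! i) v else None)"

definition botpos :: "('d, 'z) sym tree \<Rightarrow> nat list set" where
  "botpos t = {v. map_option root (subt t v) = Some Bot}"

definition is_context :: "('a \<Rightarrow> nat) \<Rightarrow> 'a set \<Rightarrow> ('a, unit) sym tree \<Rightarrow> bool" where
  "is_context rk S C \<longleftrightarrow> in_Tb rk S {} C \<and> card (botpos C) = 1"

text \<open>Greatest lower bound w.r.t. the prefix order (largest common prefix, bottom at the
  highest nodes of disagreement).\<close>
function glb :: "('d, 'z) sym tree \<Rightarrow> ('d, 'z) sym tree \<Rightarrow> ('d, 'z) sym tree" where
  "glb (Node l ts) (Node l' ts') =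
     (if l = l' \<and> length ts = length ts'
      then Node l (map (\<lambda>i. glb (ts ! i) (ts' ! i)) [0..<length ts])
      else Node Bot [])"
  by pat_completeness auto
termination
  proof (relation "measure (\<lambda>(t, t'). size t)", goal_cases)
  case 1 then show ?case by simp
next
  case (2 l ts l' ts' i)
  then have "ts ! i \<in> set ts" by simp
  then have "size (ts ! i) \<le> size_list size ts" by (rule size_list_estimation') simp
  then show ?case by simp
qed

fun glb_list :: "('d, 'z) sym tree list \<Rightarrow> ('d, 'z) sym tree" where
  "glb_list [] = Node Bot []"
| "glb_list (t # ts) = fold glb ts t"

fun tsubst :: "('d, 'z) sym tree \<Rightarrow> ('z \<Rightarrow> ('d, 'w) sym tree) \<Rightarrow> ('d, 'w) sym tree" where
  "tsubst (Node (Sym d) ts) f = Node (Sym d) (map (\<lambda>t. tsubst t f) ts)"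
| "tsubst (Node (Var z) ts) f = f z"
| "tsubst (Node Bot ts) f = Node Bot []"

fun osubst :: "('d, 'z) sym tree \<Rightarrow> ('z \<Rightarrow> ('d, 'w) sym tree option) \<Rightarrow> ('d, 'w) sym tree option" where
  "osubst (Node (Sym d) ts) f = map_option (Node (Sym d)) (those (map (\<lambda>t. osubst t f) ts))"
| "osubst (Node (Var z) ts) f = f z"
| "osubst (Node Bot ts) f = Some (Node Bot [])"

text \<open>A dtla from Sigma to Delta: states Q, look-ahead states P, transition function delta of
  the bottom-up look-ahead automaton, axioms A(p) (leaves Var q stand for q(x0)), and partial
  rules rhs q a [p1,...,pk] (leaves Var (q', i) stand for q'(x_i), 1 \<le> i \<le> k).\<close>
record ('a, 'd, 'q, 'p) dtla =
  states :: "'q set"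
  lastates :: "'p set"
  delta :: "'a \<Rightarrow> 'p list \<Rightarrow> 'p"
  axiom :: "'p \<Rightarrow> ('d, 'q) sym tree"
  rhs :: "'q \<Rightarrow> 'a \<Rightarrow> 'p list \<Rightarrow> ('d, 'q \<times> nat) sym tree option"

definition is_dtla ::
  "('a \<Rightarrow> nat) \<Rightarrow> 'a set \<Rightarrow> ('d \<Rightarrow> nat) \<Rightarrow> 'd set \<Rightarrow> ('a, 'd, 'q, 'p) dtla \<Rightarrow> bool" where
  "is_dtla rkS S rkD D M \<longleftrightarrow>
     finite (states M) \<and> finite (lastates M) \<and> lastates M \<noteq> {} \<and>
     (\<forall>a\<in>S. \<forall>ps. length ps = rkS a \<and> set ps \<subseteq> lastates M \<longrightarrow> delta M a ps \<in> lastates M) \<and>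
     (\<forall>p\<in>lastates M. in_T rkD D (states M) (axiom M p)) \<and>
     (\<forall>q a ps r. rhs M q a ps = Some r \<longrightarrow>
        q \<in> states M \<and> a \<in> S \<and> length ps = rkS a \<and> set ps \<subseteq> lastates M \<and>
        in_T rkD D (states M \<times> {1..rkS a}) r)"

fun run :: "('a, 'd, 'q, 'p) dtla \<Rightarrow> 'p \<Rightarrow> ('a, unit) sym tree \<Rightarrow> 'p" where
  "run M p (Node (Sym a) ts) = delta M a (map (run M p) ts)"
| "run M p (Node (Var z) ts) = p"
| "run M p (Node Bot ts) = p"

fun qrun :: "('a, 'd, 'q, 'p) dtla \<Rightarrow> 'p \<Rightarrow> ('q \<Rightarrow> ('d, 'w) sym tree option)
             \<Rightarrow> ('a, unit) sym tree \<Rightarrow> 'q \<Rightarrow> ('d, 'w) sym tree option" where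
  "qrun M p h (Node (Sym a) ts) =
     (let rs = map (qrun M p h) ts; ps = map (run M p) ts in
      (\<lambda>q. case rhs M q a ps of
             None \<Rightarrow> None
           | Some r \<Rightarrow> osubst r (\<lambda>(q', i). if 0 < i \<and> i \<le> length ts then (rs ! (i - 1)) q' else None)))"
| "qrun M p h (Node (Var z) ts) = (\<lambda>q. None)"
| "qrun M p h (Node Bot ts) = h"

definition qsem :: "('a, 'd, 'q, 'p) dtla \<Rightarrow> 'q \<Rightarrow> ('a, unit) sym tree \<Rightarrow> ('d, unit) sym tree option" where
  "qsem M q s = qrun M undefined (\<lambda>_. None) s q"

definition msem :: "('a, 'd, 'q, 'p) dtla \<Rightarrow> ('a, unit) sym tree \<Rightarrow> ('d, unit) sym tree option" where
  "msem M s = osubst (axiom M (run M undefined s)) (\<lambda>q. qsem M q s)"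

text \<open>Output on a context with the hole treated as a leaf of look-ahead state p, where
  q_M(p) = <q,p>: this is M(C[p]).\<close>
definition cout :: "('a, 'd, 'q, 'p) dtla \<Rightarrow> ('a, unit) sym tree \<Rightarrow> 'p \<Rightarrow> ('d, 'q \<times> 'p) sym tree option" where
  "cout M C p = osubst (axiom M (run M p C))
                   (qrun M p (\<lambda>q. Some (Node (Var (q, p)) [])) C)"

definition equivalent ::
  "('a \<Rightarrow> nat) \<Rightarrow> 'a set \<Rightarrow> ('a, 'd, 'q1, 'p1) dtla \<Rightarrow> ('a, 'd, 'q2, 'p2) dtla \<Rightarrow> bool" where
  "equivalent rkS S M N \<longleftrightarrow> (\<forall>s. in_T rkS S {} s \<longrightarrow> msem M s = msem N s)"

definition total :: "('a \<Rightarrow> nat) \<Rightarrow> 'a set \<Rightarrow> ('a, 'd, 'q, 'p) dtla \<Rightarrow> bool" where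
  "total rkS S M \<longleftrightarrow> (\<forall>s. in_T rkS S {} s \<longrightarrow> msem M s \<noteq> None)"

definition la_uniform :: "('a \<Rightarrow> nat) \<Rightarrow> 'a set \<Rightarrow> ('a, 'd, 'q, 'p) dtla \<Rightarrow> bool" where
  "la_uniform rkS S M \<longleftrightarrow> (\<exists>\<rho>. (\<forall>q\<in>states M. \<rho> q \<in> lastates M) \<and>
     (\<forall>q\<in>states M. \<forall>s. in_T rkS S {} s \<longrightarrow> (qsem M q s \<noteq> None \<longleftrightarrow> run M undefined s = \<rho> q)) \<and>
     (\<forall>p\<in>lastates M. \<forall>q. Var q \<in> set_tree (axiom M p) \<longrightarrow> \<rho> q = p) \<and>
     (\<forall>q a ps r q' i. rhs M q a ps = Some r \<and> Var (q', i) \<in> set_tree r \<longrightarrow> \<rho> q' = ps ! (i - 1)) \<and>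
     (\<forall>q\<in>states M. \<forall>a\<in>S. \<forall>ps. length ps = rkS a \<and> set ps \<subseteq> lastates M \<longrightarrow>
        (rhs M q a ps \<noteq> None \<longleftrightarrow> delta M a ps = \<rho> q)))"

definition earliest :: "('a \<Rightarrow> nat) \<Rightarrow> 'a set \<Rightarrow> 'd set \<Rightarrow> ('a, 'd, 'q, 'p) dtla \<Rightarrow> bool" where
  "earliest rkS S D M \<longleftrightarrow> \<not> (\<exists>q\<in>states M. \<exists>d\<in>D. \<forall>s. in_T rkS S {} s \<and> qsem M q s \<noteq> None \<longrightarrow>
       map_option root (qsem M q s) = Some (Sym d))"

definition reachable :: "('a \<Rightarrow> nat) \<Rightarrow> 'a set \<Rightarrow> ('a, 'd, 'q, 'p) dtla \<Rightarrow> 'q \<Rightarrow> bool" where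
  "reachable rkS S M q \<longleftrightarrow> (\<exists>C p t. is_context rkS S C \<and> p \<in> lastates M \<and>
       cout M C p = Some t \<and> Var (q, p) \<in> set_tree t)"

definition canonical ::
  "('a \<Rightarrow> nat) \<Rightarrow> 'a set \<Rightarrow> ('d \<Rightarrow> nat) \<Rightarrow> 'd set \<Rightarrow> ('a, 'd, 'q, 'p) dtla \<Rightarrow> bool" where
  "canonical rkS S rkD D M \<longleftrightarrow> total rkS S M \<and> la_uniform rkS S M \<and> earliest rkS S D M \<and>
     (\<forall>q\<in>states M. reachable rkS S M q) \<and>
     (\<forall>q\<in>states M. \<forall>q'\<in>states M. q \<noteq> q' \<longrightarrow>
        (\<exists>s. in_T rkS S {} s \<and> qsem M q s \<noteq> qsem M q' s))"

definition is_dtop :: "('a, 'd, 'q, 'p) dtla \<Rightarrow> bool" where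
  "is_dtop M \<longleftrightarrow> card (lastates M) = 1"

definition is_dtpla :: "('a, 'd, 'q, 'p) dtla \<Rightarrow> bool" where
  "is_dtpla M \<longleftrightarrow> card (lastates M) \<ge> 2"

definition diftup :: "('a \<Rightarrow> nat) \<Rightarrow> 'a set \<Rightarrow> ('a, 'd, 'q, 'p) dtla \<Rightarrow> 'p list
                      \<Rightarrow> ('d, 'q \<times> 'p) sym tree list set" where
  "diftup rkS S M ps = {map (\<lambda>t. the (subt t v)) ts | C v ts.
      is_context rkS S C \<and> those (map (cout M C) ps) = Some ts \<and> v \<in> botpos (glb_list ts)}"

definition is_aheadness ::
  "('a \<Rightarrow> nat) \<Rightarrow> 'a set \<Rightarrow> ('a, 'd, 'q1, 'p1) dtla \<Rightarrow> ('a, 'd, 'q2, 'p2) dtla \<Rightarrow> 'p2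
   \<Rightarrow> ('q2 \<Rightarrow> 'p1 \<Rightarrow> ('d, 'q1 \<times> 'p1) sym tree) \<Rightarrow> bool" where
  "is_aheadness rkS S M N pN \<phi> \<longleftrightarrow>
     (\<forall>C p. is_context rkS S C \<and> p \<in> lastates M \<longrightarrow>
        cout M C p = map_option (\<lambda>t. tsubst t (\<lambda>(q, _). \<phi> q p)) (cout N C pN))"

end

theory Submission
  imports Defs
begin

text \<open>
  Every state q of the dtop N occurs at some node v of an output N(C). By the aheadness
  mapping, M(C[p]) carries phi(q, p) at v for every look-ahead state p, and plugging ground
  trees s into C and using equivalence gives
  q_N(s) = phi(q, delta_M(s))[<q', _> <- q'_M(s)]; so distinct states of N have distinct
  tuples psi(q). The trees phi(q, p) have no common root: a common state leaf would carry
  every look-ahead state at once, and a common output symbol would make q non-earliest.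
  Hence v is a bottom node of pref(M, C) and psi(q) lies in diftup(M). Conversely
  pref(M, C) = N(C)[<q, _> <- glb psi(q)], so every bottom node of pref(M, C) is a state leaf
  of N(C), and the corresponding tuple is some psi(q).
\<close>

section \<open>Substitution and plugging\<close>

lemma those_eq_Some_iff: "those xs = Some ys \<longleftrightarrow> xs = map Some ys"
  by (induction xs arbitrary: ys) (auto split: option.splits)

lemma bind_those_map:
  "Option.bind (those (map f xs)) (\<lambda>ys. those (map g ys)) = those (map (\<lambda>x. Option.bind (f x) g) xs)"
proof (induction xs)
  case (Cons x xs)
  then show ?case
    by (cases "those (map f xs)") (auto simp: bind_map_option split: option.splits)
qed simp

lemma osubst_bind:
  "Option.bind (osubst r f) (\<lambda>t. osubst t g) = osubst r (\<lambda>z. Option.bind (f z) (\<lambda>t. osubst t g))"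
proof (induction r f rule: osubst.induct)
  case (1 d ts f)
  have "Option.bind (osubst (Node (Sym d) ts) f) (\<lambda>t. osubst t g)
      = map_option (Node (Sym d)) (Option.bind (those (map (\<lambda>t. osubst t f) ts)) (\<lambda>us. those (map (\<lambda>u. osubst u g) us)))"
    by (auto simp: bind_map_option map_option_bind cong: Option.bind_cong)
  also have "\<dots> = osubst (Node (Sym d) ts) (\<lambda>z. Option.bind (f z) (\<lambda>t. osubst t g))"
    by (simp add: bind_those_map 1 cong: map_cong)
  finally show ?case .
qed auto

lemma root_osubst_Sym:
  "root t = Sym d \<Longrightarrow> osubst t f \<noteq> None \<Longrightarrow> map_option root (osubst t f) = Some (Sym d)"
  by (cases t) auto

fun plug :: "('a, unit) sym tree \<Rightarrow> ('a, unit) sym tree \<Rightarrow> ('a, unit) sym tree" where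
  "plug (Node (Sym a) ts) s = Node (Sym a) (map (\<lambda>t. plug t s) ts)"
| "plug (Node (Var z) ts) s = Node (Var z) ts"
| "plug (Node Bot ts) s = s"

lemma in_T_plug: "in_Tb rk S {} C \<Longrightarrow> in_T rk S {} s \<Longrightarrow> in_T rk S {} (plug C s)"
  by (induction rk S "{}::unit set" C rule: in_Tb.induct) auto

lemma run_plug: "in_Tb rk S {} C \<Longrightarrow> run M p (plug C s) = run M (run M p s) C"
  by (induction rk S "{}::unit set" C rule: in_Tb.induct) (auto cong: map_cong)

lemma qrun_plug:
  "in_Tb rk S {} C \<Longrightarrow> qrun M p h (plug C s) = qrun M (run M p s) (qrun M p h s) C"
proof (induction rk S "{}::unit set" C rule: in_Tb.induct)
  case (1 rk S a ts)
  then have "map (run M p) (map (\<lambda>t. plug t s) ts) = map (run M (run M p s)) ts"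
    and "map (qrun M p h) (map (\<lambda>t. plug t s) ts) = map (qrun M (run M p s) (qrun M p h s)) ts"
    by (auto simp: run_plug)
  then show ?case
    by (simp only: plug.simps qrun.simps Let_def length_map)
qed auto

lemma qrun_bind:
  "Option.bind (qrun M p h C q) (\<lambda>t. osubst t g)
   = qrun M p (\<lambda>q. Option.bind (h q) (\<lambda>t. osubst t g)) C q"
proof (induction M p h C arbitrary: q rule: qrun.induct)
  case (1 M p h a ts)
  have "ts ! (i - 1) \<in> set ts" if "0 < i" "i \<le> length ts" for i
    using that by simp
  with 1 show ?case
    by (auto simp: Let_def osubst_bind fun_eq_iff split: option.split
        intro!: arg_cong[where f = "osubst _"])
qed auto

lemma cout_plug:
  assumes "in_Tb rk S {} C"
  shows "Option.bind (cout M C (run M undefined s)) (\<lambda>t. osubst t (\<lambda>(q, _). qsem M q s))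
         = msem M (plug C s)"
  unfolding cout_def msem_def osubst_bind
  by (simp add: qrun_bind qrun_plug[OF assms] run_plug[OF assms] qsem_def)

section \<open>Well-formed outputs\<close>

lemma in_T_osubst:
  assumes "in_T rk D Z r" and "\<And>z u. z \<in> Z \<Longrightarrow> f z = Some u \<Longrightarrow> in_T rk D W u"
    and "osubst r f = Some t"
  shows "in_T rk D W t"
  using assms
proof (induction r f arbitrary: t rule: osubst.induct)
  case (1 d ts f)
  then obtain us where us: "map (\<lambda>t. osubst t f) ts = map Some us" "t = Node (Sym d) us"
    by (auto simp: those_eq_Some_iff)
  then have "\<exists>t'\<in>set ts. osubst t' f = Some u" if "u \<in> set us" for u
    using that by (metis (no_types, lifting) image_iff list.set_map)
  moreover have "length us = length ts"
    using us(1) by (metis length_map)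
  ultimately show ?case
    using 1 us(2) by fastforce
qed auto

lemma delta_in_lastates:
  "is_dtla rkS S rkD D M \<Longrightarrow> a \<in> S \<Longrightarrow> length ps = rkS a \<Longrightarrow> set ps \<subseteq> lastates M
   \<Longrightarrow> delta M a ps \<in> lastates M"
  by (simp add: is_dtla_def)

lemma run_in_lastates:
  assumes "is_dtla rkS S rkD D M" and "p \<in> lastates M"
  shows "in_Tb rkS S {} C \<Longrightarrow> run M p C \<in> lastates M"
  using assms
  by (induction rkS S "{}::unit set" C rule: in_Tb.induct) (auto intro!: delta_in_lastates)

lemma run_ground_in_lastates:
  assumes "is_dtla rkS S rkD D M"
  shows "in_T rkS S {} s \<Longrightarrow> run M p s \<in> lastates M"
  using assms
  by (induction rkS S "{}::unit set" s rule: in_T.induct) (auto intro!: delta_in_lastates)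

lemma in_T_qrun:
  assumes M: "is_dtla rkS S rkD D M"
    and h: "\<And>q u. q \<in> states M \<Longrightarrow> h q = Some u \<Longrightarrow> in_T rkD D W u"
  shows "in_Tb rkS S {} C \<Longrightarrow> q \<in> states M \<Longrightarrow> qrun M p h C q = Some t \<Longrightarrow> in_T rkD D W t"
proof (induction C arbitrary: q t)
  case (Node l ts)
  show ?case
  proof (cases l)
    case (Sym a)
    then obtain r where r: "rhs M q a (map (run M p) ts) = Some r"
      and os: "osubst r (\<lambda>(q', i). if 0 < i \<and> i \<le> length ts then (map (qrun M p h) ts ! (i - 1)) q' else None)
               = Some t"
      using Node.prems by (auto simp: Let_def split: option.splits)
    have "in_T rkD D (states M \<times> {1..rkS a}) r"
      using M r by (auto simp: is_dtla_def)
    then show ?thesis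
    proof (rule in_T_osubst[OF _ _ os])
      fix z u
      assume z: "z \<in> states M \<times> {1..rkS a}"
        and u: "(\<lambda>(q', i). if 0 < i \<and> i \<le> length ts then (map (qrun M p h) ts ! (i - 1)) q' else None) z
                = Some u"
      obtain q' i where zi: "z = (q', i)" "q' \<in> states M" "0 < i" "i \<le> length ts"
        using z Node.prems(1) Sym by auto
      then have mem: "ts ! (i - 1) \<in> set ts"
        by simp
      moreover have "in_Tb rkS S {} (ts ! (i - 1))"
        using Node.prems(1) Sym mem by auto
      moreover have "qrun M p h (ts ! (i - 1)) q' = Some u"
        using u zi by simp
      ultimately show "in_T rkD D W u"
        using Node.IH zi(2) by blast
    qed
  qed (use Node.prems h in auto)
qed

lemma in_T_cout:
  assumes M: "is_dtla rkS S rkD D M" and "p \<in> lastates M" and "in_Tb rkS S {} C"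
    and "cout M C p = Some t"
  shows "in_T rkD D (states M \<times> {p}) t"
proof -
  have "in_T rkD D (states M) (axiom M (run M p C))"
    using M run_in_lastates[OF M assms(2,3)] by (simp add: is_dtla_def)
  moreover have "in_T rkD D (states M \<times> {p}) u"
    if "q \<in> states M" "qrun M p (\<lambda>q. Some (Node (Var (q, p)) [])) C q = Some u" for q u
    by (rule in_T_qrun[OF M _ assms(3) that]) auto
  ultimately show ?thesis
    using assms(4) in_T_osubst unfolding cout_def by blast
qed

section \<open>Subtrees and greatest lower bounds\<close>

lemma in_T_subt: "in_T rk D Z t \<Longrightarrow> subt t v = Some w \<Longrightarrow> in_T rk D Z w"
proof (induction t v rule: subt.induct)
  case (2 l ts i v)
  then show ?case by (cases l) (auto split: if_splits)
qed auto

lemma subt_tsubst_Var: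
  "in_T rk D Z t \<Longrightarrow> subt t v = Some (Node (Var z) ys) \<Longrightarrow> subt (tsubst t f) v = Some (f z)"
proof (induction t v rule: subt.induct)
  case (2 l ts i v)
  then show ?case by (cases l) (auto split: if_splits)
qed auto

lemma subt_tsubst_Bot:
  "in_T rk D Z t \<Longrightarrow> subt (tsubst t f) v = Some w \<Longrightarrow> root w = Bot \<Longrightarrow>
   \<exists>v1 v2 z ys. v = v1 @ v2 \<and> subt t v1 = Some (Node (Var z) ys) \<and> subt (f z) v2 = Some w"
proof (induction t arbitrary: v)
  case (Node l ts)
  show ?case
  proof (cases l)
    case (Sym d)
    with Node.prems obtain i v' where v: "v = i # v'" "i < length ts"
      and w: "subt (tsubst (ts ! i) f) v'= Some w"
      by (cases v) (auto split: if_splits)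
    from Node.IH[OF _ _ w] Node.prems Sym v obtain v1 v2 z ys
      where "v' = v1 @ v2" "subt (ts ! i) v1 = Some (Node (Var z) ys)" "subt (f z) v2 = Some w"
      by auto
    moreover have "subt (Node l ts) (i # v1) = Some (Node (Var z) ys)"
      using v(2) \<open>subt (ts ! i) v1 = _\<close> by simp
    ultimately show ?thesis
      using v(1) by (metis append_Cons)
  next
    case (Var z)
    with Node.prems show ?thesis
      by (metis append_Nil subt.simps(1) tsubst.simps(2))
  qed (use Node.prems in auto)
qed

lemma subt_osubst:
  "in_T rk D Z t \<Longrightarrow> osubst t f = Some u \<Longrightarrow> subt t v = Some w \<Longrightarrow> subt u v = osubst w f"
proof (induction t v arbitrary: u rule: subt.induct)
  case (2 l ts i v)
  show ?case
  proof (cases l)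
    case (Sym d)
    with "2.prems" obtain us where us: "map (\<lambda>t. osubst t f) ts = map Some us" "u = Node (Sym d) us"
      by (auto simp: those_eq_Some_iff)
    moreover have i: "i < length ts"
      using "2.prems"(3) by (auto split: if_splits)
    ultimately have "osubst (ts ! i) f = Some (us ! i)"
      by (metis length_map nth_map)
    with "2" Sym us i show ?thesis
      by (auto dest: map_eq_imp_length_eq)
  qed (use "2.prems" in auto)
qed auto

lemma subt_of_set_tree: "l \<in> set_tree t \<Longrightarrow> \<exists>v ys. subt t v = Some (Node l ys)"
proof (induction t)
  case (Node l' ts)
  show ?case
  proof (cases "l = l'")
    case False
    then obtain i where i: "i < length ts" "l \<in> set_tree (ts ! i)"
      using Node.prems by (auto simp: in_set_conv_nth)
    with Node.IH[OF nth_mem] obtain v ys where "subt (ts ! i) v = Some (Node l ys)"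
      by blast
    with i show ?thesis
      by (intro exI[of _ "i # v"]) auto
  qed (auto intro: exI[of _ "[]"])
qed

lemma in_T_root_not_Bot: "in_T rk D Z t \<Longrightarrow> root t \<noteq> Bot"
  by (cases "(rk, D, Z, t)" rule: in_T.cases) auto

lemma in_T_root_Var: "in_T rk D Z t \<Longrightarrow> root t = Var z \<Longrightarrow> z \<in> Z"
  by (cases "(rk, D, Z, t)" rule: in_T.cases) auto

lemma in_T_root_Sym: "in_T rk D Z t \<Longrightarrow> root t = Sym d \<Longrightarrow> d \<in> D"
  by (cases "(rk, D, Z, t)" rule: in_T.cases) auto

lemma glb_tsubst: "glb (tsubst t f) (tsubst t g) = tsubst t (\<lambda>z. glb (f z) (g z))"
proof (induction t)
  case (Node l ts)
  then show ?case
    by (cases l) (auto intro: nth_equalityI)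
qed

lemma fold_glb_tsubst:
  "fold glb (map (\<lambda>x. tsubst t (f x)) xs) (tsubst t g) = tsubst t (\<lambda>z. fold glb (map (\<lambda>x. f x z) xs) (g z))"
  by (induction xs arbitrary: g) (simp_all add: glb_tsubst)

lemma glb_list_tsubst:
  "xs \<noteq> [] \<Longrightarrow> glb_list (map (\<lambda>x. tsubst t (f x)) xs) = tsubst t (\<lambda>z. glb_list (map (\<lambda>x. f x z) xs))"
  by (cases xs) (simp_all add: fold_glb_tsubst)

lemma root_glb: "root (glb a b) \<noteq> Bot \<Longrightarrow> root a = root (glb a b) \<and> root b = root (glb a b)"
  by (cases a; cases b) (auto split: if_splits)

lemma glb_eq_Bot: "root (glb a b) = Bot \<Longrightarrow> root b \<noteq> Bot \<Longrightarrow> glb a b = Node Bot []"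
  by (cases a; cases b) (auto split: if_splits)

lemma fold_glb_Bot: "fold glb ts (Node Bot []) = Node Bot []"
proof (induction ts)
  case (Cons u ts)
  have "glb u (Node Bot []) = Node Bot []"
    by (cases u) auto
  with Cons show ?case by simp
qed simp

lemma root_fold_glb:
  "root (fold glb ts t) \<noteq> Bot \<Longrightarrow> u \<in> set (t # ts) \<Longrightarrow> root u = root (fold glb ts t)"
proof (induction ts arbitrary: t u)
  case (Cons u' ts)
  let ?r = "root (fold glb ts (glb u' t))"
  have IH: "root x = ?r" if "x \<in> set (glb u' t # ts)" for x
    using Cons.IH Cons.prems(1) that by simp
  then have "root (glb u' t) = ?r" and "?r \<noteq> Bot"
    using Cons.prems(1) by auto
  with root_glb[of u' t] have "root u' = ?r" "root t = ?r"
    by auto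
  with IH Cons.prems(2) show ?case
    by auto
qed simp

lemma fold_glb_eq_Bot:
  "root t \<noteq> Bot \<Longrightarrow> root (fold glb ts t) = Bot \<Longrightarrow> fold glb ts t = Node Bot []"
proof (induction ts arbitrary: t)
  case (Cons u ts)
  show ?case
  proof (cases "root (glb u t) = Bot")
    case True
    with Cons.prems glb_eq_Bot[of u t] show ?thesis
      by (simp add: fold_glb_Bot)
  next
    case False
    with Cons root_glb[of u t] show ?thesis
      by simp
  qed
qed simp

lemma glb_list_eq_Bot:
  assumes "\<forall>u\<in>set ts. root u \<noteq> Bot" and "\<forall>l. \<exists>u\<in>set ts. root u \<noteq> l"
  shows "glb_list ts = Node Bot []"
proof (cases ts)
  case (Cons t ts')
  with assms root_fold_glb[of ts' t] have "root (fold glb ts' t) = Bot"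
    by (metis list.set_intros(1))
  with fold_glb_eq_Bot Cons assms(1) show ?thesis
    by auto
qed (use assms in auto)

section \<open>Aheadness of a canonical dtop\<close>

locale dtop_aheadness =
  fixes rkS :: "'a \<Rightarrow> nat" and S :: "'a set" and rkD :: "'d \<Rightarrow> nat" and D :: "'d set"
    and M :: "('a, 'd, 'q1, 'p1) dtla" and N :: "('a, 'd, 'q2, 'p2) dtla"
    and pN :: 'p2 and \<phi> :: "'q2 \<Rightarrow> 'p1 \<Rightarrow> ('d, 'q1 \<times> 'p1) sym tree" and ps :: "'p1 list"
  assumes M_dtla: "is_dtla rkS S rkD D M" and N_dtla: "is_dtla rkS S rkD D N"
    and N_canonical: "canonical rkS S rkD D N"
    and equiv: "equivalent rkS S M N"
    and M_dtpla: "is_dtpla M" and N_lastates: "lastates N = {pN}"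
    and set_ps: "set ps = lastates M"
    and aheadness: "is_aheadness rkS S M N pN \<phi>"
begin

lemma cout_M_from_N:
  "is_context rkS S C \<Longrightarrow> cout N C pN = Some tN \<Longrightarrow> p \<in> lastates M
   \<Longrightarrow> cout M C p = Some (tsubst tN (\<lambda>(q, _). \<phi> q p))"
  using aheadness by (simp add: is_aheadness_def)

lemma in_T_cout_N:
  "is_context rkS S C \<Longrightarrow> cout N C pN = Some tN \<Longrightarrow> in_T rkD D (states N \<times> {pN}) tN"
  using in_T_cout[OF N_dtla] N_lastates by (auto simp: is_context_def)

lemma state_occurs:
  assumes "q \<in> states N"
  obtains C tN v ys where "is_context rkS S C" "cout N C pN = Some tN"
    "subt tN v = Some (Node (Var (q, pN)) ys)"
proof -
  obtain C p t where C: "is_context rkS S C" and p: "p \<in> lastates N" and t: "cout N C p = Some t"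
    and q: "Var (q, p) \<in> set_tree t"
    using N_canonical assms by (auto simp: canonical_def reachable_def)
  have "p = pN"
    using p N_lastates by simp
  with subt_of_set_tree[OF q] C t that show ?thesis
    by blast
qed

lemma in_T_phi:
  assumes "q \<in> states N" and "p \<in> lastates M"
  shows "in_T rkD D (states M \<times> {p}) (\<phi> q p)"
proof -
  obtain C tN v ys where C: "is_context rkS S C" and tN: "cout N C pN = Some tN"
    and v: "subt tN v = Some (Node (Var (q, pN)) ys)"
    using state_occurs[OF assms(1)] .
  have "in_T rkD D (states M \<times> {p}) (tsubst tN (\<lambda>(q, _). \<phi> q p))"
    using in_T_cout[OF M_dtla assms(2) _ cout_M_from_N[OF C tN assms(2)]] C by (simp add: is_context_def)
  with subt_tsubst_Var[OF in_T_cout_N[OF C tN] v, of "\<lambda>(q, _). \<phi> q p"] show ?thesis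
    by (auto intro: in_T_subt)
qed

lemma qsem_N:
  assumes "q \<in> states N" and s: "in_T rkS S {} s"
  shows "qsem N q s = osubst (\<phi> q (run M undefined s)) (\<lambda>(q', _). qsem M q' s)"
proof -
  obtain C tN v ys where C: "is_context rkS S C" and tN: "cout N C pN = Some tN"
    and v: "subt tN v = Some (Node (Var (q, pN)) ys)"
    using state_occurs[OF assms(1)] .
  let ?p = "run M undefined s"
  have CT: "in_Tb rkS S {} C"
    using C by (simp add: is_context_def)
  have p: "?p \<in> lastates M"
    by (rule run_ground_in_lastates[OF M_dtla s])
  have "run N undefined s = pN"
    using run_ground_in_lastates[OF N_dtla s] N_lastates by simp
  then have eN: "osubst tN (\<lambda>(q', _). qsem N q' s) = msem N (plug C s)"
    using cout_plug[OF CT, of N s] tN by simp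
  have eM: "osubst (tsubst tN (\<lambda>(q, _). \<phi> q ?p)) (\<lambda>(q', _). qsem M q' s) = msem N (plug C s)"
    using cout_plug[OF CT, of M s] cout_M_from_N[OF C tN p] equiv in_T_plug[OF CT s]
    by (simp add: equivalent_def)
  obtain u where u: "msem N (plug C s) = Some u"
    using N_canonical in_T_plug[OF CT s] by (auto simp: canonical_def total_def)
  have tM: "in_T rkD D (states M \<times> {?p}) (tsubst tN (\<lambda>(q, _). \<phi> q ?p))"
    using in_T_cout[OF M_dtla p CT cout_M_from_N[OF C tN p]] .
  have "qsem N q s = subt u v"
    using subt_osubst[OF in_T_cout_N[OF C tN] _ v, of _ u] eN u by simp
  also have "\<dots> = osubst (\<phi> q ?p) (\<lambda>(q', _). qsem M q' s)"
    using subt_osubst[OF tM _ subt_tsubst_Var[OF in_T_cout_N[OF C tN] v], of _ u] eM u by simp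
  finally show ?thesis .
qed

lemma two_lastates_M:
  obtains p1 p2 where "p1 \<in> lastates M" "p2 \<in> lastates M" "p1 \<noteq> p2"
  using M_dtpla card_le_Suc0_iff_eq[of "lastates M"] M_dtla
  by (force simp: is_dtpla_def is_dtla_def)

lemma glb_phi_Bot:
  assumes q: "q \<in> states N"
  shows "glb_list (map (\<phi> q) ps) = Node Bot []"
proof (rule glb_list_eq_Bot)
  have T: "in_T rkD D (states M \<times> {p}) (\<phi> q p)" if "p \<in> set ps" for p
    using in_T_phi[OF q] that set_ps by simp
  then show "\<forall>u\<in>set (map (\<phi> q) ps). root u \<noteq> Bot"
    by (auto dest: in_T_root_not_Bot)
  show "\<forall>l. \<exists>u\<in>set (map (\<phi> q) ps). root u \<noteq> l"
  proof (rule allI, rule ccontr)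
    fix l
    assume "\<not> (\<exists>u\<in>set (map (\<phi> q) ps). root u \<noteq> l)"
    then have root: "root (\<phi> q p) = l" if "p \<in> lastates M" for p
      using that set_ps by auto
    obtain p1 p2 where p12: "p1 \<in> lastates M" "p2 \<in> lastates M" "p1 \<noteq> p2"
      by (rule two_lastates_M)
    show False
    proof (cases l)
      case (Var z)
      then have "z \<in> states M \<times> {p1}" "z \<in> states M \<times> {p2}"
        using T root p12 set_ps in_T_root_Var by metis+
      with p12(3) show False
        by auto
    next
      case (Sym d)
      then have "d \<in> D"
        using T root p12(1) set_ps in_T_root_Sym by metis
      moreover have "map_option root (qsem N q s) = Some (Sym d)"
        if "in_T rkS S {} s" "qsem N q s \<noteq> None" for s
        using that qsem_N[OF q] root_osubst_Sym root Sym run_ground_in_lastates[OF M_dtla]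
        by metis
      moreover have "earliest rkS S D N"
        using N_canonical by (simp add: canonical_def)
      ultimately show False
        using q unfolding earliest_def by blast
    next
      case Bot
      with root p12(1) T set_ps in_T_root_not_Bot show False
        by metis
    qed
  qed
qed

lemma inj_on_aheads: "inj_on (\<lambda>q. map (\<phi> q) ps) (states N)"
proof (rule inj_onI, rule ccontr)
  fix q q'
  assume q: "q \<in> states N" and q': "q' \<in> states N" and eq: "map (\<phi> q) ps = map (\<phi> q') ps"
    and "q \<noteq> q'"
  then obtain s where s: "in_T rkS S {} s" and ne: "qsem N q s \<noteq> qsem N q' s"
    using N_canonical q q' unfolding canonical_def by blast
  have "run M undefined s \<in> set ps"
    using run_ground_in_lastates[OF M_dtla s] set_ps by simp
  with eq have "\<phi> q (run M undefined s) = \<phi> q' (run M undefined s)"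
    by simp
  with ne show False
    using qsem_N[OF q s] qsem_N[OF q' s] by simp
qed

lemma ps_nonempty: "ps \<noteq> []"
  using set_ps M_dtla by (auto simp: is_dtla_def)

lemma those_cout_M_from_N:
  "is_context rkS S C \<Longrightarrow> cout N C pN = Some tN
   \<Longrightarrow> those (map (cout M C) ps) = Some (map (\<lambda>p. tsubst tN (\<lambda>(q, _). \<phi> q p)) ps)"
  using cout_M_from_N set_ps by (simp add: those_eq_Some_iff)

lemma those_cout_M_SomeE:
  assumes C: "is_context rkS S C" and ts: "those (map (cout M C) ps) = Some ts"
  obtains tN where "cout N C pN = Some tN" and "ts = map (\<lambda>p. tsubst tN (\<lambda>(q, _). \<phi> q p)) ps"
proof -
  have p: "hd ps \<in> lastates M"
    using ps_nonempty set_ps hd_in_set by blast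
  from ts have "map (cout M C) ps = map Some ts"
    by (simp add: those_eq_Some_iff)
  then have "cout M C (hd ps) \<noteq> None"
    using ps_nonempty by (metis hd_map option.distinct(1) list.map_disc_iff)
  then obtain tN where "cout N C pN = Some tN"
    using p C aheadness by (auto simp: is_aheadness_def)
  with ts those_cout_M_from_N[OF C] that show ?thesis
    by simp
qed

lemma glb_list_aheads:
  "glb_list (map (\<lambda>p. tsubst t (\<lambda>(q, _). \<phi> q p)) ps) = tsubst t (\<lambda>(q, _). glb_list (map (\<phi> q) ps))"
  using glb_list_tsubst[OF ps_nonempty, of t "\<lambda>p (q, _). \<phi> q p"] by (simp add: split_def)

lemma aheads_in_diftup:
  assumes q: "q \<in> states N"
  shows "map (\<phi> q) ps \<in> diftup rkS S M ps"
proof -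
  obtain C tN v ys where C: "is_context rkS S C" and tN: "cout N C pN = Some tN"
    and v: "subt tN v = Some (Node (Var (q, pN)) ys)"
    using state_occurs[OF q] .
  note subt_v = subt_tsubst_Var[OF in_T_cout_N[OF C tN] v]
  let ?ts = "map (\<lambda>p. tsubst tN (\<lambda>(q, _). \<phi> q p)) ps"
  have "v \<in> botpos (glb_list ?ts)"
    using subt_v[of "\<lambda>(q, _). glb_list (map (\<phi> q) ps)"] glb_phi_Bot[OF q]
    by (simp add: botpos_def glb_list_aheads)
  moreover have "map (\<lambda>t. the (subt t v)) ?ts = map (\<phi> q) ps"
    by (simp add: subt_v)
  ultimately show ?thesis
    using C those_cout_M_from_N[OF C tN] unfolding diftup_def
    by (intro CollectI exI[of _ C] exI[of _ v] exI[of _ ?ts]) simp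
qed

lemma diftup_subset_aheads: "diftup rkS S M ps \<subseteq> (\<lambda>q. map (\<phi> q) ps) ` states N"
proof
  fix x
  assume "x \<in> diftup rkS S M ps"
  then obtain C v ts where x: "x = map (\<lambda>t. the (subt t v)) ts" and C: "is_context rkS S C"
    and ts: "those (map (cout M C) ps) = Some ts" and v: "v \<in> botpos (glb_list ts)"
    unfolding diftup_def by blast
  obtain tN where tN: "cout N C pN = Some tN" and ts_eq: "ts = map (\<lambda>p. tsubst tN (\<lambda>(q, _). \<phi> q p)) ps"
    using those_cout_M_SomeE[OF C ts] .
  have tNT: "in_T rkD D (states N \<times> {pN}) tN"
    by (rule in_T_cout_N[OF C tN])
  obtain w where w: "subt (tsubst tN (\<lambda>(q, _). glb_list (map (\<phi> q) ps))) v = Some w"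
    and w_Bot: "root w = Bot"
    using v ts_eq by (auto simp: botpos_def glb_list_aheads)
  from subt_tsubst_Bot[OF tNT w w_Bot] obtain v1 v2 z ys where v12: "v = v1 @ v2"
    and v1: "subt tN v1 = Some (Node (Var z) ys)"
    and v2: "subt ((\<lambda>(q, _). glb_list (map (\<phi> q) ps)) z) v2 = Some w"
    by blast
  moreover obtain q where z: "z = (q, pN)" and q: "q \<in> states N"
    using in_T_subt[OF tNT v1] by auto
  moreover have "v2 = []"
    using v2 glb_phi_Bot[OF q] z by (cases v2) auto
  ultimately have "x = map (\<phi> q) ps"
    using x ts_eq by (simp add: subt_tsubst_Var[OF tNT v1])
  with q show "x \<in> (\<lambda>q. map (\<phi> q) ps) ` states N"
    by blast
qed

end

theorem mainTheorem5:
  fixes rkS :: "'a \<Rightarrow> nat" and S :: "'a set" and rkD :: "'d \<Rightarrow> nat" and D :: "'d set"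
    and M :: "('a, 'd, 'q1, 'p1) dtla" and N :: "('a, 'd, 'q2, 'p2) dtla"
    and ps :: "'p1 list" and pN :: 'p2
    and \<phi> :: "'q2 \<Rightarrow> 'p1 \<Rightarrow> ('d, 'q1 \<times> 'p1) sym tree"
  assumes "finite S" and "finite D"
    and "is_dtla rkS S rkD D M" and "is_dtla rkS S rkD D N"
    and "canonical rkS S rkD D M" and "canonical rkS S rkD D N"
    and "equivalent rkS S M N"
    and "is_dtpla M" and "is_dtop N" and "lastates N = {pN}"
    and "distinct ps" and "set ps = lastates M"
    and "is_aheadness rkS S M N pN \<phi>"
  shows "bij_betw (\<lambda>q. map (\<phi> q) ps) (states N) (diftup rkS S M ps)"
proof -
  interpret dtop_aheadness rkS S rkD D M N pN \<phi> ps
    using assms by unfold_locales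
  show ?thesis
    using inj_on_aheads aheads_in_diftup diftup_subset_aheads
    by (intro bij_betw_imageI) auto
qed

end
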